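(* Let $(\mathcal C,\otimes,I,a,l,r)$ be a monoidal category, let $(F,\Delta,\varepsilon,F_2,F_0)$ and $(G,\delta,\epsilon,G_2,G_0)$ be bicomonads on $\mathcal C$, and let $\varphi:FG\to GF$ be a comonad distributive law. For $\varphi$-bicomodules $(X,\theta^X,\rho^X)$ and $(Y,\theta^Y,\rho^Y)$ define on $X\otimes Y$ the $F$-coaction $\theta^{X\otimes Y}=F_2(X,Y)\circ(\theta^X\otimes\theta^Y)$ and the $G$-coaction $\rho^{X\otimes Y}=G_2(X,Y)\circ(\rho^X\otimes\rho^Y)$, and give $I$ the coactions $F_0$ and $G_0$. Then $(\mathcal C^{(F,G)}(\varphi),\otimes,I,a,l,r)$ is a monoidal category (with these structures) if and only if for all objects $M,N$ of $\mathcal C$: (a) $\varphi_{M\otimes N}\circ F(G_2(M,N))\circ F_2(GM,GN)=G(F_2(M,N))\circ G_2(FM,FN)\circ(\varphi_M\otimes\varphi_N)$; (b) $\varphi_I\circ F(G_0)\circ F_0=G(F_0)\circ G_0$.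
   Context: A comonad $(F,\Delta,\varepsilon)$ on a category $\mathcal C$ is an endofunctor $F$ with natural transformations $\Delta:F\to FF$, $\varepsilon:F\to \mathrm{id}$ such that $F\Delta\circ\Delta=\Delta F\circ\Delta$ and $F\varepsilon\circ\Delta=\varepsilon F\circ\Delta=\mathrm{id}_F$. An $F$-comodule is a pair $(X,\theta^X)$ with $\theta^X:X\to FX$, $F\theta^X\circ\theta^X=\Delta_X\circ\theta^X$, $\varepsilon_X\circ\theta^X=\mathrm{id}_X$. For comonads $(F,\Delta,\varepsilon)$, $(G,\delta,\epsilon)$, a comonad distributive law is a natural transformation $\varphi:FG\to GF$ with $G\varphi\circ\varphi G\circ F\delta=\delta F\circ\varphi$, $\varphi F\circ F\varphi\circ\Delta G=G\Delta\circ\varphi$, $G\varepsilon\circ\varphi=\varepsilon G$, $\epsilon F\circ\varphi=F\epsilon$. A $\varphi$-bicomodule is a triple $(M,\theta^M,\rho^M)$ with $(M,\theta^M)$ an $F$-comodule, $(M,\rho^M)$ a $G$-comodule and $\varphi_M\circ F(\rho^M)\circ\theta^M=G(\theta^M)\circ\rho^M$; morphisms are maps that are both $F$- and $G$-comodule maps; this category is $\mathcal C^{(F,G)}(\varphi)$. A bicomonad on a monoidal category is a comonad $(G,\delta,\epsilon)$ which is also a monoidal functor $(G,G_2,G_0)$ (natural $G_2(X,Y):GX\otimes GY\to G(X\otimes Y)$, morphism $G_0:I\to GI$, satisfying the usual associativity and unit coherence with $a,l,r$) such that $G(G_2(X,Y))\circ G_2(GX,GY)\circ(\delta_X\otimes\delta_Y)=\delta_{X\otimes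 Y}\circ G_2(X,Y)$, $\epsilon_{X\otimes Y}\circ G_2(X,Y)=\epsilon_X\otimes\epsilon_Y$, $G(G_0)\circ G_0=\delta_I\circ G_0$, $\epsilon_I\circ G_0=\mathrm{id}_I$. *)

theory Defs
  imports Main
begin

section \<open>Categories (objects = all elements of type 'o, morphisms = all elements of type 'm)\<close>

record ('o,'m) cat =
  cdom  :: "'m \<Rightarrow> 'o"
  ccod  :: "'m \<Rightarrow> 'o"
  cid   :: "'o \<Rightarrow> 'm"
  ccomp :: "'m \<Rightarrow> 'm \<Rightarrow> 'm"   (* ccomp C g f = g \<circ> f *)

definition hom where
  "hom C f X Y \<equiv> cdom C f = X \<and> ccod C f = Y"

definition is_category where
  "is_category C \<equiv>
     (\<forall>X. hom C (cid C X) X X) \<and>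
     (\<forall>f g. ccod C f = cdom C g \<longrightarrow> hom C (ccomp C g f) (cdom C f) (ccod C g)) \<and>
     (\<forall>f. ccomp C f (cid C (cdom C f)) = f \<and> ccomp C (cid C (ccod C f)) f = f) \<and>
     (\<forall>f g h. ccod C f = cdom C g \<and> ccod C g = cdom C h \<longrightarrow>
         ccomp C h (ccomp C g f) = ccomp C (ccomp C h g) f)"

definition iso where
  "iso C f \<equiv> \<exists>g. hom C g (ccod C f) (cdom C f) \<and>
                 ccomp C g f = cid C (cdom C f) \<and> ccomp C f g = cid C (ccod C f)"

record ('o,'m) endofunctor =
  fo :: "'o \<Rightarrow> 'o"
  fm :: "'m \<Rightarrow> 'm"

definition fcomp :: "('o,'m) endofunctor \<Rightarrow> ('o,'m) endofunctor \<Rightarrow> ('o,'m) endofunctor" where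
  "fcomp F G = \<lparr>fo = (\<lambda>X. fo F (fo G X)), fm = (\<lambda>f. fm F (fm G f))\<rparr>"

definition idfunctor :: "('o,'m) endofunctor" where
  "idfunctor = \<lparr>fo = (\<lambda>X. X), fm = (\<lambda>f. f)\<rparr>"

definition is_endofunctor where
  "is_endofunctor C F \<equiv>
     (\<forall>f. hom C (fm F f) (fo F (cdom C f)) (fo F (ccod C f))) \<and>
     (\<forall>X. fm F (cid C X) = cid C (fo F X)) \<and>
     (\<forall>f g. ccod C f = cdom C g \<longrightarrow> fm F (ccomp C g f) = ccomp C (fm F g) (fm F f))"

definition nat_trans where
  "nat_trans C F G \<eta> \<equiv>
     (\<forall>X. hom C (\<eta> X) (fo F X) (fo G X)) \<and>
     (\<forall>f. ccomp C (fm G f) (\<eta> (cdom C f)) = ccomp C (\<eta> (ccod C f)) (fm F f))"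

record ('o,'m) moncat = "('o,'m) cat" +
  tobj  :: "'o \<Rightarrow> 'o \<Rightarrow> 'o"
  tmor  :: "'m \<Rightarrow> 'm \<Rightarrow> 'm"
  unit  :: "'o"
  assoc :: "'o \<Rightarrow> 'o \<Rightarrow> 'o \<Rightarrow> 'm"   (* a X Y Z : (X\<otimes>Y)\<otimes>Z \<rightarrow> X\<otimes>(Y\<otimes>Z) *)
  lunit :: "'o \<Rightarrow> 'm"                 (* l X : I\<otimes>X \<rightarrow> X *)
  runit :: "'o \<Rightarrow> 'm"                 (* r X : X\<otimes>I \<rightarrow> X *)

definition is_monoidal where
  "is_monoidal C \<equiv> is_category C \<and>
     (\<forall>f g. hom C (tmor C f g) (tobj C (cdom C f) (cdom C g)) (tobj C (ccod C f) (ccod C g))) \<and>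
     (\<forall>X Y. tmor C (cid C X) (cid C Y) = cid C (tobj C X Y)) \<and>
     (\<forall>f g f' g'. ccod C f = cdom C g \<and> ccod C f' = cdom C g' \<longrightarrow>
        tmor C (ccomp C g f) (ccomp C g' f') = ccomp C (tmor C g g') (tmor C f f')) \<and>
     (\<forall>X Y Z. hom C (assoc C X Y Z) (tobj C (tobj C X Y) Z) (tobj C X (tobj C Y Z))
              \<and> iso C (assoc C X Y Z)) \<and>
     (\<forall>f g h. ccomp C (assoc C (ccod C f) (ccod C g) (ccod C h)) (tmor C (tmor C f g) h)
            = ccomp C (tmor C f (tmor C g h)) (assoc C (cdom C f) (cdom C g) (cdom C h))) \<and>
     (\<forall>X. hom C (lunit C X) (tobj C (unit C) X) X \<and> iso C (lunit C X)) \<and>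
     (\<forall>f. ccomp C f (lunit C (cdom C f)) = ccomp C (lunit C (ccod C f)) (tmor C (cid C (unit C)) f)) \<and>
     (\<forall>X. hom C (runit C X) (tobj C X (unit C)) X \<and> iso C (runit C X)) \<and>
     (\<forall>f. ccomp C f (runit C (cdom C f)) = ccomp C (runit C (ccod C f)) (tmor C f (cid C (unit C)))) \<and>
     (\<forall>X Y. ccomp C (tmor C (cid C X) (lunit C Y)) (assoc C X (unit C) Y)
            = tmor C (runit C X) (cid C Y)) \<and>
     (\<forall>W X Y Z.
        ccomp C (tmor C (cid C W) (assoc C X Y Z))
          (ccomp C (assoc C W (tobj C X Y) Z) (tmor C (assoc C W X Y) (cid C Z)))
        = ccomp C (assoc C W X (tobj C Y Z)) (assoc C (tobj C W X) Y Z))"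

definition is_monoidal_functor where
  "is_monoidal_functor C F F2 F0 \<equiv> is_endofunctor C F \<and>
     (\<forall>X Y. hom C (F2 X Y) (tobj C (fo F X) (fo F Y)) (fo F (tobj C X Y))) \<and>
     (\<forall>f g. ccomp C (fm F (tmor C f g)) (F2 (cdom C f) (cdom C g))
          = ccomp C (F2 (ccod C f) (ccod C g)) (tmor C (fm F f) (fm F g))) \<and>
     hom C F0 (unit C) (fo F (unit C)) \<and>
     (\<forall>X Y Z.
        ccomp C (fm F (assoc C X Y Z))
          (ccomp C (F2 (tobj C X Y) Z) (tmor C (F2 X Y) (cid C (fo F Z))))
        = ccomp C (F2 X (tobj C Y Z))
            (ccomp C (tmor C (cid C (fo F X)) (F2 Y Z)) (assoc C (fo F X) (fo F Y) (fo F Z)))) \<and>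
     (\<forall>X. ccomp C (fm F (lunit C X)) (ccomp C (F2 (unit C) X) (tmor C F0 (cid C (fo F X))))
          = lunit C (fo F X)) \<and>
     (\<forall>X. ccomp C (fm F (runit C X)) (ccomp C (F2 X (unit C)) (tmor C (cid C (fo F X)) F0))
          = runit C (fo F X))"

definition is_comonad where
  "is_comonad C F \<Delta> \<epsilon> \<equiv> is_endofunctor C F \<and>
     nat_trans C F (fcomp F F) \<Delta> \<and> nat_trans C F idfunctor \<epsilon> \<and>
     (\<forall>X. ccomp C (fm F (\<Delta> X)) (\<Delta> X) = ccomp C (\<Delta> (fo F X)) (\<Delta> X)) \<and>
     (\<forall>X. ccomp C (fm F (\<epsilon> X)) (\<Delta> X) = cid C (fo F X)) \<and>
     (\<forall>X. ccomp C (\<epsilon> (fo F X)) (\<Delta> X) = cid C (fo F X))"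

definition is_bicomonad where
  "is_bicomonad C F \<Delta> \<epsilon> F2 F0 \<equiv> is_comonad C F \<Delta> \<epsilon> \<and> is_monoidal_functor C F F2 F0 \<and>
     (\<forall>X Y. ccomp C (fm F (F2 X Y)) (ccomp C (F2 (fo F X) (fo F Y)) (tmor C (\<Delta> X) (\<Delta> Y)))
          = ccomp C (\<Delta> (tobj C X Y)) (F2 X Y)) \<and>
     (\<forall>X Y. ccomp C (\<epsilon> (tobj C X Y)) (F2 X Y) = tmor C (\<epsilon> X) (\<epsilon> Y)) \<and>
     ccomp C (fm F F0) F0 = ccomp C (\<Delta> (unit C)) F0 \<and>
     ccomp C (\<epsilon> (unit C)) F0 = cid C (unit C)"

definition is_distributive_law where
  "is_distributive_law C F \<Delta> \<epsilon> G \<delta> \<epsilon>' \<phi> \<equiv>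
     nat_trans C (fcomp F G) (fcomp G F) \<phi> \<and>
     (\<forall>X. ccomp C (fm G (\<phi> X)) (ccomp C (\<phi> (fo G X)) (fm F (\<delta> X)))
          = ccomp C (\<delta> (fo F X)) (\<phi> X)) \<and>
     (\<forall>X. ccomp C (\<phi> (fo F X)) (ccomp C (fm F (\<phi> X)) (\<Delta> (fo G X)))
          = ccomp C (fm G (\<Delta> X)) (\<phi> X)) \<and>
     (\<forall>X. ccomp C (fm G (\<epsilon> X)) (\<phi> X) = \<epsilon> (fo G X)) \<and>
     (\<forall>X. ccomp C (\<epsilon>' (fo F X)) (\<phi> X) = fm F (\<epsilon>' X))"

definition is_comodule where
  "is_comodule C F \<Delta> \<epsilon> X \<theta> \<equiv> hom C \<theta> X (fo F X) \<and>
     ccomp C (fm F \<theta>) \<theta> = ccomp C (\<Delta> X) \<theta> \<and> ccomp C (\<epsilon> X) \<theta> = cid C X"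

definition is_comodule_map where
  "is_comodule_map C F X \<theta>X Y \<theta>Y f \<equiv> hom C f X Y \<and> ccomp C \<theta>Y f = ccomp C (fm F f) \<theta>X"

definition is_bicomodule where
  "is_bicomodule C F \<Delta> \<epsilon> G \<delta> \<epsilon>' \<phi> A \<equiv> (case A of (M, \<theta>, \<rho>) \<Rightarrow>
     is_comodule C F \<Delta> \<epsilon> M \<theta> \<and> is_comodule C G \<delta> \<epsilon>' M \<rho> \<and>
     ccomp C (\<phi> M) (ccomp C (fm F \<rho>) \<theta>) = ccomp C (fm G \<theta>) \<rho>)"

definition is_bicomodule_map where
  "is_bicomodule_map C F G A B f \<equiv> (case A of (X, \<theta>X, \<rho>X) \<Rightarrow> case B of (Y, \<theta>Y, \<rho>Y) \<Rightarrow>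
     is_comodule_map C F X \<theta>X Y \<theta>Y f \<and> is_comodule_map C G X \<rho>X Y \<rho>Y f)"

definition is_bicomodule_iso where
  "is_bicomodule_iso C F G A B f \<equiv> is_bicomodule_map C F G A B f \<and>
     (\<exists>g. is_bicomodule_map C F G B A g \<and>
          ccomp C g f = cid C (fst A) \<and> ccomp C f g = cid C (fst B))"

definition btens where
  "btens C F2 G2 A B \<equiv> (case A of (X, \<theta>X, \<rho>X) \<Rightarrow> case B of (Y, \<theta>Y, \<rho>Y) \<Rightarrow>
     (tobj C X Y, ccomp C (F2 X Y) (tmor C \<theta>X \<theta>Y), ccomp C (G2 X Y) (tmor C \<rho>X \<rho>Y)))"

definition bunit where
  "bunit C F0 G0 \<equiv> (unit C, F0, G0)"

text \<open>The category of phi-bicomodules, with the tensor product, unit and constraints a, l, r of C,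
  is a monoidal category: objects are closed under the tensor/unit, morphisms are closed under
  tensoring, and a, l, r are isomorphisms in the category of bicomodules. (Functoriality,
  naturality, pentagon and triangle are then inherited from C, since composition, identities
  and tensor of morphisms are those of C.)\<close>

definition bicomodules_monoidal where
  "bicomodules_monoidal C F \<Delta> \<epsilon> F2 F0 G \<delta> \<epsilon>' G2 G0 \<phi> \<equiv>
     (let B = is_bicomodule C F \<Delta> \<epsilon> G \<delta> \<epsilon>' \<phi>;
          T = btens C F2 G2;
          U = bunit C F0 G0 in
      B U \<and>
      (\<forall>X Y. B X \<and> B Y \<longrightarrow> B (T X Y)) \<and>
      (\<forall>X X' Y Y' f g. B X \<and> B X' \<and> B Y \<and> B Y' \<and>
          is_bicomodule_map C F G X X' f \<and> is_bicomodule_map C F G Y Y' g \<longrightarrow>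
          is_bicomodule_map C F G (T X Y) (T X' Y') (tmor C f g)) \<and>
      (\<forall>X Y Z. B X \<and> B Y \<and> B Z \<longrightarrow>
          is_bicomodule_iso C F G (T (T X Y) Z) (T X (T Y Z)) (assoc C (fst X) (fst Y) (fst Z))) \<and>
      (\<forall>X. B X \<longrightarrow> is_bicomodule_iso C F G (T U X) X (lunit C (fst X))) \<and>
      (\<forall>X. B X \<longrightarrow> is_bicomodule_iso C F G (T X U) X (runit C (fst X))))"

end

theory Submission
  imports Defs
begin

text \<open>If (a) and (b) hold, the tensor coactions are comodule coactions by the bicomonad axioms,
  their compatibility with \<open>\<phi>\<close> is a direct computation using (a), the unit is a bicomodule by (b),
  and the constraints \<open>a, l, r\<close> are bicomodule maps by the coherence of \<open>F\<^sub>2\<close> and \<open>G\<^sub>2\<close>.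
  Conversely, \<open>FGM\<close> is a bicomodule with coactions \<open>\<Delta>\<^sub>G\<^sub>M\<close> and \<open>\<phi>\<^sub>G\<^sub>M \<circ> F\<delta>\<^sub>M\<close>. The compatibility
  condition for the tensor product of two such cofree bicomodules, pushed forward along the
  counits \<open>\<epsilon>'\<^sub>M \<circ> \<epsilon>\<^sub>G\<^sub>M : FGM \<rightarrow> M\<close>, is exactly (a); the unit being a bicomodule is exactly (b).\<close>

locale monoidal_category =
  fixes C :: "('o,'m,'x) moncat_scheme"
  assumes monoidal: "is_monoidal C"
begin

lemma category: "is_category C"
  using monoidal by (simp add: is_monoidal_def)

lemma dom_id[simp]: "cdom C (cid C X) = X"
  and cod_id[simp]: "ccod C (cid C X) = X"
  using category by (auto simp: is_category_def hom_def)

lemma dom_comp[simp]: "ccod C f = cdom C g \<Longrightarrow> cdom C (ccomp C g f) = cdom C f"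
  and cod_comp[simp]: "ccod C f = cdom C g \<Longrightarrow> ccod C (ccomp C g f) = ccod C g"
  using category by (auto simp: is_category_def hom_def)

lemma comp_id_right[simp]: "cdom C f = X \<Longrightarrow> ccomp C f (cid C X) = f"
  and comp_id_left[simp]: "ccod C f = X \<Longrightarrow> ccomp C (cid C X) f = f"
  using category by (auto simp: is_category_def)

lemma comp_assoc[simp]:
  "ccod C f = cdom C g \<Longrightarrow> ccod C g = cdom C h \<Longrightarrow>
   ccomp C (ccomp C h g) f = ccomp C h (ccomp C g f)"
  using category by (auto simp: is_category_def)

lemma comp_eq_precomp:
  assumes "ccomp C g f = ccomp C g' f'"
    and "ccod C f = cdom C g" "ccod C f' = cdom C g'" "ccod C x = cdom C f" "ccod C x = cdom C f'"
  shows "ccomp C g (ccomp C f x) = ccomp C g' (ccomp C f' x)"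
  by (metis assms comp_assoc)

lemma dom_tmor[simp]: "cdom C (tmor C f g) = tobj C (cdom C f) (cdom C g)"
  and cod_tmor[simp]: "ccod C (tmor C f g) = tobj C (ccod C f) (ccod C g)"
  using monoidal by (auto simp: is_monoidal_def hom_def)

lemma tmor_id[simp]: "tmor C (cid C X) (cid C Y) = cid C (tobj C X Y)"
  using monoidal by (auto simp: is_monoidal_def)

lemma interchange:
  "ccod C f = cdom C g \<Longrightarrow> ccod C f' = cdom C g' \<Longrightarrow>
   tmor C (ccomp C g f) (ccomp C g' f') = ccomp C (tmor C g g') (tmor C f f')"
  using monoidal by (auto simp: is_monoidal_def)

lemma dom_assoc[simp]: "cdom C (assoc C X Y Z) = tobj C (tobj C X Y) Z"
  and cod_assoc[simp]: "ccod C (assoc C X Y Z) = tobj C X (tobj C Y Z)"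
  and iso_assoc: "iso C (assoc C X Y Z)"
  using monoidal by (auto simp: is_monoidal_def hom_def)

lemma assoc_naturality:
  "ccomp C (assoc C (ccod C f) (ccod C g) (ccod C h)) (tmor C (tmor C f g) h)
   = ccomp C (tmor C f (tmor C g h)) (assoc C (cdom C f) (cdom C g) (cdom C h))"
  using monoidal by (auto simp: is_monoidal_def)

lemma dom_lunit[simp]: "cdom C (lunit C X) = tobj C (unit C) X"
  and cod_lunit[simp]: "ccod C (lunit C X) = X"
  and iso_lunit: "iso C (lunit C X)"
  using monoidal by (auto simp: is_monoidal_def hom_def)

lemma lunit_naturality:
  "ccomp C f (lunit C (cdom C f)) = ccomp C (lunit C (ccod C f)) (tmor C (cid C (unit C)) f)"
  using monoidal by (auto simp: is_monoidal_def)

lemma dom_runit[simp]: "cdom C (runit C X) = tobj C X (unit C)"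
  and cod_runit[simp]: "ccod C (runit C X) = X"
  and iso_runit: "iso C (runit C X)"
  using monoidal by (auto simp: is_monoidal_def hom_def)

lemma runit_naturality:
  "ccomp C f (runit C (cdom C f)) = ccomp C (runit C (ccod C f)) (tmor C f (cid C (unit C)))"
  using monoidal by (auto simp: is_monoidal_def)

end

locale bicomonad = monoidal_category +
  fixes F :: "('o,'m) endofunctor" and \<Delta> \<epsilon> :: "'o \<Rightarrow> 'm"
    and F2 :: "'o \<Rightarrow> 'o \<Rightarrow> 'm" and F0 :: 'm
  assumes bicomonad: "is_bicomonad C F \<Delta> \<epsilon> F2 F0"
begin

lemma comonad: "is_comonad C F \<Delta> \<epsilon>"
  and monoidal_functor: "is_monoidal_functor C F F2 F0"
  using bicomonad by (auto simp: is_bicomonad_def)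

lemma endofunctor: "is_endofunctor C F"
  using comonad by (simp add: is_comonad_def)

lemma dom_fm[simp]: "cdom C (fm F f) = fo F (cdom C f)"
  and cod_fm[simp]: "ccod C (fm F f) = fo F (ccod C f)"
  and fm_id[simp]: "fm F (cid C X) = cid C (fo F X)"
  using endofunctor by (auto simp: is_endofunctor_def hom_def)

lemma fm_comp: "ccod C f = cdom C g \<Longrightarrow> fm F (ccomp C g f) = ccomp C (fm F g) (fm F f)"
  using endofunctor by (auto simp: is_endofunctor_def)

lemma dom_comult[simp]: "cdom C (\<Delta> X) = fo F X"
  and cod_comult[simp]: "ccod C (\<Delta> X) = fo F (fo F X)"
  and dom_counit[simp]: "cdom C (\<epsilon> X) = fo F X"
  and cod_counit[simp]: "ccod C (\<epsilon> X) = X"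
  using comonad by (auto simp: is_comonad_def nat_trans_def hom_def fcomp_def idfunctor_def)

lemma comult_naturality: "ccomp C (fm F (fm F f)) (\<Delta> (cdom C f)) = ccomp C (\<Delta> (ccod C f)) (fm F f)"
  and counit_naturality: "ccomp C f (\<epsilon> (cdom C f)) = ccomp C (\<epsilon> (ccod C f)) (fm F f)"
  using comonad by (auto simp: is_comonad_def nat_trans_def fcomp_def idfunctor_def)

lemma coassoc: "ccomp C (fm F (\<Delta> X)) (\<Delta> X) = ccomp C (\<Delta> (fo F X)) (\<Delta> X)"
  and fm_counit_comult: "ccomp C (fm F (\<epsilon> X)) (\<Delta> X) = cid C (fo F X)"
  and counit_comult: "ccomp C (\<epsilon> (fo F X)) (\<Delta> X) = cid C (fo F X)"
  using comonad by (auto simp: is_comonad_def)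

lemma dom_F2[simp]: "cdom C (F2 X Y) = tobj C (fo F X) (fo F Y)"
  and cod_F2[simp]: "ccod C (F2 X Y) = fo F (tobj C X Y)"
  and dom_F0[simp]: "cdom C F0 = unit C"
  and cod_F0[simp]: "ccod C F0 = fo F (unit C)"
  using monoidal_functor by (auto simp: is_monoidal_functor_def hom_def)

lemma F2_naturality:
  "ccomp C (fm F (tmor C f g)) (F2 (cdom C f) (cdom C g))
   = ccomp C (F2 (ccod C f) (ccod C g)) (tmor C (fm F f) (fm F g))"
  using monoidal_functor by (auto simp: is_monoidal_functor_def)

lemma F2_assoc:
    "ccomp C (fm F (assoc C X Y Z)) (ccomp C (F2 (tobj C X Y) Z) (tmor C (F2 X Y) (cid C (fo F Z))))
     = ccomp C (F2 X (tobj C Y Z))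
         (ccomp C (tmor C (cid C (fo F X)) (F2 Y Z)) (assoc C (fo F X) (fo F Y) (fo F Z)))"
  and F2_lunit:
    "ccomp C (fm F (lunit C X)) (ccomp C (F2 (unit C) X) (tmor C F0 (cid C (fo F X))))
     = lunit C (fo F X)"
  and F2_runit:
    "ccomp C (fm F (runit C X)) (ccomp C (F2 X (unit C)) (tmor C (cid C (fo F X)) F0))
     = runit C (fo F X)"
  using monoidal_functor by (auto simp: is_monoidal_functor_def)

lemma comult_F2:
    "ccomp C (fm F (F2 X Y)) (ccomp C (F2 (fo F X) (fo F Y)) (tmor C (\<Delta> X) (\<Delta> Y)))
     = ccomp C (\<Delta> (tobj C X Y)) (F2 X Y)"
  and counit_F2: "ccomp C (\<epsilon> (tobj C X Y)) (F2 X Y) = tmor C (\<epsilon> X) (\<epsilon> Y)"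
  and comult_F0: "ccomp C (fm F F0) F0 = ccomp C (\<Delta> (unit C)) F0"
  and counit_F0: "ccomp C (\<epsilon> (unit C)) F0 = cid C (unit C)"
  using bicomonad by (auto simp: is_bicomonad_def)
lemma comodule_tensor:
  assumes X: "is_comodule C F \<Delta> \<epsilon> X \<theta>X" and Y: "is_comodule C F \<Delta> \<epsilon> Y \<theta>Y"
  shows "is_comodule C F \<Delta> \<epsilon> (tobj C X Y) (ccomp C (F2 X Y) (tmor C \<theta>X \<theta>Y))"
proof -
  have [simp]: "cdom C \<theta>X = X" "ccod C \<theta>X = fo F X" and cx: "ccomp C (fm F \<theta>X) \<theta>X = ccomp C (\<Delta> X) \<theta>X"
    and ux: "ccomp C (\<epsilon> X) \<theta>X = cid C X"
    using X by (auto simp: is_comodule_def hom_def)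
  have [simp]: "cdom C \<theta>Y = Y" "ccod C \<theta>Y = fo F Y" and cy: "ccomp C (fm F \<theta>Y) \<theta>Y = ccomp C (\<Delta> Y) \<theta>Y"
    and uy: "ccomp C (\<epsilon> Y) \<theta>Y = cid C Y"
    using Y by (auto simp: is_comodule_def hom_def)
  have n: "ccomp C (fm F (tmor C \<theta>X \<theta>Y)) (F2 X Y) = ccomp C (F2 (fo F X) (fo F Y)) (tmor C (fm F \<theta>X) (fm F \<theta>Y))"
    using F2_naturality[of \<theta>X \<theta>Y] by simp
  have "ccomp C (fm F (ccomp C (F2 X Y) (tmor C \<theta>X \<theta>Y))) (ccomp C (F2 X Y) (tmor C \<theta>X \<theta>Y))
     = ccomp C (fm F (F2 X Y)) (ccomp C (fm F (tmor C \<theta>X \<theta>Y)) (ccomp C (F2 X Y) (tmor C \<theta>X \<theta>Y)))"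
    by (simp add: fm_comp)
  also have "\<dots> = ccomp C (fm F (F2 X Y)) (ccomp C (F2 (fo F X) (fo F Y)) (ccomp C (tmor C (fm F \<theta>X) (fm F \<theta>Y)) (tmor C \<theta>X \<theta>Y)))"
    by (simp add: comp_eq_precomp[OF n])
  also have "\<dots> = ccomp C (fm F (F2 X Y)) (ccomp C (F2 (fo F X) (fo F Y)) (tmor C (ccomp C (\<Delta> X) \<theta>X) (ccomp C (\<Delta> Y) \<theta>Y)))"
    by (simp add: interchange[symmetric] cx cy)
  also have "\<dots> = ccomp C (fm F (F2 X Y)) (ccomp C (F2 (fo F X) (fo F Y)) (ccomp C (tmor C (\<Delta> X) (\<Delta> Y)) (tmor C \<theta>X \<theta>Y)))"
    by (simp add: interchange)
  also have "\<dots> = ccomp C (\<Delta> (tobj C X Y)) (ccomp C (F2 X Y) (tmor C \<theta>X \<theta>Y))"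
    using comult_F2[of X Y] by (simp flip: comp_assoc)
  finally have coassoc_tensor: "ccomp C (fm F (ccomp C (F2 X Y) (tmor C \<theta>X \<theta>Y))) (ccomp C (F2 X Y) (tmor C \<theta>X \<theta>Y)) =
     ccomp C (\<Delta> (tobj C X Y)) (ccomp C (F2 X Y) (tmor C \<theta>X \<theta>Y))" .
  have counit_tensor: "ccomp C (\<epsilon> (tobj C X Y)) (ccomp C (F2 X Y) (tmor C \<theta>X \<theta>Y)) = cid C (tobj C X Y)"
    using counit_F2[of X Y] by (simp add: interchange[symmetric] ux uy flip: comp_assoc)
  show ?thesis using coassoc_tensor counit_tensor by (simp add: is_comodule_def hom_def)
qed

lemma comodule_unit: "is_comodule C F \<Delta> \<epsilon> (unit C) F0"
  using comult_F0 counit_F0 by (simp add: is_comodule_def hom_def)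

lemma tmor_comodule_map:
  assumes f: "is_comodule_map C F X \<theta>X X' \<theta>X' f" and g: "is_comodule_map C F Y \<theta>Y Y' \<theta>Y' g"
    and hx: "hom C \<theta>X X (fo F X)" "hom C \<theta>X' X' (fo F X')"
    and hy: "hom C \<theta>Y Y (fo F Y)" "hom C \<theta>Y' Y' (fo F Y')"
  shows "is_comodule_map C F (tobj C X Y) (ccomp C (F2 X Y) (tmor C \<theta>X \<theta>Y))
           (tobj C X' Y') (ccomp C (F2 X' Y') (tmor C \<theta>X' \<theta>Y')) (tmor C f g)"
proof -
  have [simp]: "cdom C \<theta>X = X" "ccod C \<theta>X = fo F X" "cdom C \<theta>X' = X'" "ccod C \<theta>X' = fo F X'"
    "cdom C \<theta>Y = Y" "ccod C \<theta>Y = fo F Y" "cdom C \<theta>Y' = Y'" "ccod C \<theta>Y' = fo F Y'"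
    using hx hy by (auto simp: hom_def)
  have [simp]: "cdom C f = X" "ccod C f = X'" "cdom C g = Y" "ccod C g = Y'" and
    ef: "ccomp C \<theta>X' f = ccomp C (fm F f) \<theta>X" and eg: "ccomp C \<theta>Y' g = ccomp C (fm F g) \<theta>Y"
    using f g by (auto simp: is_comodule_map_def hom_def)
  have n: "ccomp C (fm F (tmor C f g)) (F2 X Y) = ccomp C (F2 X' Y') (tmor C (fm F f) (fm F g))"
    using F2_naturality[of f g] by simp
  have "ccomp C (ccomp C (F2 X' Y') (tmor C \<theta>X' \<theta>Y')) (tmor C f g)
      = ccomp C (F2 X' Y') (tmor C (ccomp C (fm F f) \<theta>X) (ccomp C (fm F g) \<theta>Y))"
    by (simp add: interchange[symmetric] ef eg)
  also have "\<dots> = ccomp C (fm F (tmor C f g)) (ccomp C (F2 X Y) (tmor C \<theta>X \<theta>Y))"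
    by (simp add: interchange n flip: comp_assoc)
  finally show ?thesis by (simp add: is_comodule_map_def hom_def)
qed

lemma assoc_comodule_map:
  assumes hx: "hom C \<theta>X X (fo F X)" and hy: "hom C \<theta>Y Y (fo F Y)" and hz: "hom C \<theta>Z Z (fo F Z)"
  shows "is_comodule_map C F (tobj C (tobj C X Y) Z) (ccomp C (F2 (tobj C X Y) Z) (tmor C (ccomp C (F2 X Y) (tmor C \<theta>X \<theta>Y)) \<theta>Z))
     (tobj C X (tobj C Y Z)) (ccomp C (F2 X (tobj C Y Z)) (tmor C \<theta>X (ccomp C (F2 Y Z) (tmor C \<theta>Y \<theta>Z))))
     (assoc C X Y Z)"
proof -
  have [simp]: "cdom C \<theta>X = X" "ccod C \<theta>X = fo F X"
    "cdom C \<theta>Y = Y" "ccod C \<theta>Y = fo F Y" "cdom C \<theta>Z = Z" "ccod C \<theta>Z = fo F Z"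
    using hx hy hz by (auto simp: hom_def)
  have an: "ccomp C (assoc C (fo F X) (fo F Y) (fo F Z)) (tmor C (tmor C \<theta>X \<theta>Y) \<theta>Z)
      = ccomp C (tmor C \<theta>X (tmor C \<theta>Y \<theta>Z)) (assoc C X Y Z)"
    using assoc_naturality[of \<theta>X \<theta>Y \<theta>Z] by simp
  have "ccomp C (ccomp C (F2 X (tobj C Y Z)) (tmor C \<theta>X (ccomp C (F2 Y Z) (tmor C \<theta>Y \<theta>Z)))) (assoc C X Y Z)
     = ccomp C (F2 X (tobj C Y Z)) (ccomp C (tmor C (ccomp C (cid C (fo F X)) \<theta>X) (ccomp C (F2 Y Z) (tmor C \<theta>Y \<theta>Z))) (assoc C X Y Z))"
    by simp
  also have "\<dots> = ccomp C (F2 X (tobj C Y Z)) (ccomp C (tmor C (cid C (fo F X)) (F2 Y Z)) (ccomp C (tmor C \<theta>X (tmor C \<theta>Y \<theta>Z)) (assoc C X Y Z)))"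
    by (subst interchange) simp_all
  also have "\<dots> = ccomp C (F2 X (tobj C Y Z)) (ccomp C (tmor C (cid C (fo F X)) (F2 Y Z)) (ccomp C (assoc C (fo F X) (fo F Y) (fo F Z)) (tmor C (tmor C \<theta>X \<theta>Y) \<theta>Z)))"
    by (simp add: an)
  also have "\<dots> = ccomp C (fm F (assoc C X Y Z)) (ccomp C (F2 (tobj C X Y) Z) (ccomp C (tmor C (F2 X Y) (cid C (fo F Z))) (tmor C (tmor C \<theta>X \<theta>Y) \<theta>Z)))"
    using F2_assoc[of X Y Z] by (simp flip: comp_assoc)
  also have "\<dots> = ccomp C (fm F (assoc C X Y Z)) (ccomp C (F2 (tobj C X Y) Z) (tmor C (ccomp C (F2 X Y) (tmor C \<theta>X \<theta>Y)) (ccomp C (cid C (fo F Z)) \<theta>Z)))"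
    by (subst interchange[of "tmor C \<theta>X \<theta>Y" "F2 X Y" \<theta>Z "cid C (fo F Z)"]) simp_all
  finally show ?thesis by (simp add: is_comodule_map_def hom_def)
qed

lemma lunit_comodule_map:
  assumes hx: "hom C \<theta>X X (fo F X)"
  shows "is_comodule_map C F (tobj C (unit C) X) (ccomp C (F2 (unit C) X) (tmor C F0 \<theta>X)) X \<theta>X (lunit C X)"
proof -
  have [simp]: "cdom C \<theta>X = X" "ccod C \<theta>X = fo F X" using hx by (auto simp: hom_def)
  have "ccomp C \<theta>X (lunit C X) = ccomp C (lunit C (fo F X)) (tmor C (cid C (unit C)) \<theta>X)"
    using lunit_naturality[of \<theta>X] by simp
  also have "\<dots> = ccomp C (fm F (lunit C X)) (ccomp C (F2 (unit C) X) (ccomp C (tmor C F0 (cid C (fo F X))) (tmor C (cid C (unit C)) \<theta>X)))"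
    using F2_lunit[of X] by (simp flip: comp_assoc)
  also have "\<dots> = ccomp C (fm F (lunit C X)) (ccomp C (F2 (unit C) X) (tmor C F0 \<theta>X))"
    by (simp flip: interchange)
  finally show ?thesis by (simp add: is_comodule_map_def hom_def)
qed

lemma runit_comodule_map:
  assumes hx: "hom C \<theta>X X (fo F X)"
  shows "is_comodule_map C F (tobj C X (unit C)) (ccomp C (F2 X (unit C)) (tmor C \<theta>X F0)) X \<theta>X (runit C X)"
proof -
  have [simp]: "cdom C \<theta>X = X" "ccod C \<theta>X = fo F X" using hx by (auto simp: hom_def)
  have "ccomp C \<theta>X (runit C X) = ccomp C (runit C (fo F X)) (tmor C \<theta>X (cid C (unit C)))"
    using runit_naturality[of \<theta>X] by simp
  also have "\<dots> = ccomp C (fm F (runit C X)) (ccomp C (F2 X (unit C)) (ccomp C (tmor C (cid C (fo F X)) F0) (tmor C \<theta>X (cid C (unit C)))))"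
    using F2_runit[of X] by (simp flip: comp_assoc)
  also have "\<dots> = ccomp C (fm F (runit C X)) (ccomp C (F2 X (unit C)) (tmor C \<theta>X F0))"
    by (simp flip: interchange)
  finally show ?thesis by (simp add: is_comodule_map_def hom_def)
qed

lemma inverse_comodule_map:
  assumes f: "is_comodule_map C F X \<theta>X Y \<theta>Y f" and g: "hom C g Y X"
    and gf: "ccomp C g f = cid C X" and fg: "ccomp C f g = cid C Y"
    and hx: "hom C \<theta>X X (fo F X)" and hy: "hom C \<theta>Y Y (fo F Y)"
  shows "is_comodule_map C F Y \<theta>Y X \<theta>X g"
proof -
  have [simp]: "cdom C \<theta>X = X" "ccod C \<theta>X = fo F X" "cdom C \<theta>Y = Y" "ccod C \<theta>Y = fo F Y"
     "cdom C f = X" "ccod C f = Y" "cdom C g = Y" "ccod C g = X"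
    using hx hy f g by (auto simp: hom_def is_comodule_map_def)
  have ef: "ccomp C \<theta>Y f = ccomp C (fm F f) \<theta>X" using f by (simp add: is_comodule_map_def)
  have "ccomp C \<theta>X g = ccomp C (fm F (ccomp C g f)) (ccomp C \<theta>X g)" by (simp add: gf)
  also have "\<dots> = ccomp C (fm F g) (ccomp C (ccomp C (fm F f) \<theta>X) g)" by (simp add: fm_comp)
  also have "\<dots> = ccomp C (fm F g) \<theta>Y" by (simp add: fg flip: ef)
  finally show ?thesis using g by (simp add: is_comodule_map_def)
qed


end

locale distributive_bicomonads =
  F: bicomonad C F \<Delta> \<epsilon> F2 F0 + G: bicomonad C G \<delta> \<epsilon>' G2 G0
  for C :: "('o,'m,'x) moncat_scheme" and F \<Delta> \<epsilon> F2 F0 G \<delta> \<epsilon>' G2 G0 +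
  fixes \<phi> :: "'o \<Rightarrow> 'm"
  assumes distributive_law: "is_distributive_law C F \<Delta> \<epsilon> G \<delta> \<epsilon>' \<phi>"
begin

lemma dom_phi[simp]: "cdom C (\<phi> X) = fo F (fo G X)"
  and cod_phi[simp]: "ccod C (\<phi> X) = fo G (fo F X)"
  using distributive_law by (auto simp: is_distributive_law_def nat_trans_def hom_def fcomp_def)

lemma phi_naturality:
  "ccomp C (fm G (fm F f)) (\<phi> (cdom C f)) = ccomp C (\<phi> (ccod C f)) (fm F (fm G f))"
  using distributive_law by (auto simp: is_distributive_law_def nat_trans_def fcomp_def)

lemma phi_G_comult:
    "ccomp C (fm G (\<phi> X)) (ccomp C (\<phi> (fo G X)) (fm F (\<delta> X))) = ccomp C (\<delta> (fo F X)) (\<phi> X)"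
  and phi_F_comult:
    "ccomp C (\<phi> (fo F X)) (ccomp C (fm F (\<phi> X)) (\<Delta> (fo G X))) = ccomp C (fm G (\<Delta> X)) (\<phi> X)"
  and phi_F_counit: "ccomp C (fm G (\<epsilon> X)) (\<phi> X) = \<epsilon> (fo G X)"
  and phi_G_counit: "ccomp C (\<epsilon>' (fo F X)) (\<phi> X) = fm F (\<epsilon>' X)"
  using distributive_law by (auto simp: is_distributive_law_def)

abbreviation bicomodule :: "'o \<times> 'm \<times> 'm \<Rightarrow> bool" where
  "bicomodule \<equiv> is_bicomodule C F \<Delta> \<epsilon> G \<delta> \<epsilon>' \<phi>"

definition tensor_compatible :: bool where
  "tensor_compatible \<longleftrightarrow>
     (\<forall>M N. ccomp C (\<phi> (tobj C M N)) (ccomp C (fm F (G2 M N)) (F2 (fo G M) (fo G N)))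
          = ccomp C (fm G (F2 M N)) (ccomp C (G2 (fo F M) (fo F N)) (tmor C (\<phi> M) (\<phi> N))))"

definition unit_compatible :: bool where
  "unit_compatible \<longleftrightarrow> ccomp C (\<phi> (unit C)) (ccomp C (fm F G0) F0) = ccomp C (fm G F0) G0"

lemma bicomodule_homs: "bicomodule (X, \<theta>X, \<rho>X) \<Longrightarrow> hom C \<theta>X X (fo F X) \<and> hom C \<rho>X X (fo G X)"
  by (auto simp: is_bicomodule_def is_comodule_def)

lemma tensor_coactions_compatible:
  assumes tensor_compatible
    and "hom C \<theta>X X (fo F X)" "hom C \<rho>X X (fo G X)" "hom C \<theta>Y Y (fo F Y)" "hom C \<rho>Y Y (fo G Y)"
    and kx: "ccomp C (\<phi> X) (ccomp C (fm F \<rho>X) \<theta>X) = ccomp C (fm G \<theta>X) \<rho>X"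
    and ky: "ccomp C (\<phi> Y) (ccomp C (fm F \<rho>Y) \<theta>Y) = ccomp C (fm G \<theta>Y) \<rho>Y"
  shows "ccomp C (\<phi> (tobj C X Y))
           (ccomp C (fm F (ccomp C (G2 X Y) (tmor C \<rho>X \<rho>Y))) (ccomp C (F2 X Y) (tmor C \<theta>X \<theta>Y)))
         = ccomp C (fm G (ccomp C (F2 X Y) (tmor C \<theta>X \<theta>Y))) (ccomp C (G2 X Y) (tmor C \<rho>X \<rho>Y))"
proof -
  have a: "ccomp C (\<phi> (tobj C X Y)) (ccomp C (fm F (G2 X Y)) (F2 (fo G X) (fo G Y)))
      = ccomp C (fm G (F2 X Y)) (ccomp C (G2 (fo F X) (fo F Y)) (tmor C (\<phi> X) (\<phi> Y)))"
    using assms(1) by (simp add: tensor_compatible_def)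
  have [simp]: "cdom C \<theta>X = X" "ccod C \<theta>X = fo F X" "cdom C \<rho>X = X" "ccod C \<rho>X = fo G X"
    "cdom C \<theta>Y = Y" "ccod C \<theta>Y = fo F Y" "cdom C \<rho>Y = Y" "ccod C \<rho>Y = fo G Y"
    using assms(2-5) by (auto simp: hom_def)
  have n1: "ccomp C (fm F (tmor C \<rho>X \<rho>Y)) (F2 X Y)
      = ccomp C (F2 (fo G X) (fo G Y)) (tmor C (fm F \<rho>X) (fm F \<rho>Y))"
    using F.F2_naturality[of \<rho>X \<rho>Y] by simp
  have n2: "ccomp C (fm G (tmor C \<theta>X \<theta>Y)) (G2 X Y)
      = ccomp C (G2 (fo F X) (fo F Y)) (tmor C (fm G \<theta>X) (fm G \<theta>Y))"
    using G.F2_naturality[of \<theta>X \<theta>Y] by simp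
  have "ccomp C (\<phi> (tobj C X Y)) (ccomp C (fm F (ccomp C (G2 X Y) (tmor C \<rho>X \<rho>Y))) (ccomp C (F2 X Y) (tmor C \<theta>X \<theta>Y)))
    = ccomp C (\<phi> (tobj C X Y)) (ccomp C (fm F (G2 X Y)) (ccomp C (fm F (tmor C \<rho>X \<rho>Y)) (ccomp C (F2 X Y) (tmor C \<theta>X \<theta>Y))))"
    by (simp add: F.fm_comp)
  also have "\<dots> = ccomp C (\<phi> (tobj C X Y)) (ccomp C (fm F (G2 X Y)) (ccomp C (F2 (fo G X) (fo G Y)) (ccomp C (tmor C (fm F \<rho>X) (fm F \<rho>Y)) (tmor C \<theta>X \<theta>Y))))"
    by (simp add: F.comp_eq_precomp[OF n1])
  also have "\<dots> = ccomp C (fm G (F2 X Y)) (ccomp C (G2 (fo F X) (fo F Y)) (ccomp C (tmor C (\<phi> X) (\<phi> Y)) (ccomp C (tmor C (fm F \<rho>X) (fm F \<rho>Y)) (tmor C \<theta>X \<theta>Y))))"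
    using a by (simp flip: F.comp_assoc)
  also have "\<dots> = ccomp C (fm G (F2 X Y)) (ccomp C (G2 (fo F X) (fo F Y)) (tmor C (ccomp C (fm G \<theta>X) \<rho>X) (ccomp C (fm G \<theta>Y) \<rho>Y)))"
    by (simp add: F.interchange[symmetric] kx ky)
  also have "\<dots> = ccomp C (fm G (F2 X Y)) (ccomp C (G2 (fo F X) (fo F Y)) (ccomp C (tmor C (fm G \<theta>X) (fm G \<theta>Y)) (tmor C \<rho>X \<rho>Y)))"
    by (simp add: F.interchange)
  also have "\<dots> = ccomp C (fm G (F2 X Y)) (ccomp C (fm G (tmor C \<theta>X \<theta>Y)) (ccomp C (G2 X Y) (tmor C \<rho>X \<rho>Y)))"
    by (simp add: F.comp_eq_precomp[OF n2[symmetric]])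
  also have "\<dots> = ccomp C (fm G (ccomp C (F2 X Y) (tmor C \<theta>X \<theta>Y))) (ccomp C (G2 X Y) (tmor C \<rho>X \<rho>Y))"
    by (simp add: G.fm_comp)
  finally show ?thesis .
qed

lemma bicomodule_tensor:
  assumes tensor_compatible
    and X: "bicomodule (X, \<theta>X, \<rho>X)" and Y: "bicomodule (Y, \<theta>Y, \<rho>Y)"
  shows "bicomodule (btens C F2 G2 (X, \<theta>X, \<rho>X) (Y, \<theta>Y, \<rho>Y))"
proof -
  have cX: "is_comodule C F \<Delta> \<epsilon> X \<theta>X" "is_comodule C G \<delta> \<epsilon>' X \<rho>X"
   and cY: "is_comodule C F \<Delta> \<epsilon> Y \<theta>Y" "is_comodule C G \<delta> \<epsilon>' Y \<rho>Y"
   and kx: "ccomp C (\<phi> X) (ccomp C (fm F \<rho>X) \<theta>X) = ccomp C (fm G \<theta>X) \<rho>X"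
   and ky: "ccomp C (\<phi> Y) (ccomp C (fm F \<rho>Y) \<theta>Y) = ccomp C (fm G \<theta>Y) \<rho>Y"
    using X Y by (auto simp: is_bicomodule_def)
  have "hom C \<theta>X X (fo F X)" "hom C \<rho>X X (fo G X)" "hom C \<theta>Y Y (fo F Y)" "hom C \<rho>Y Y (fo G Y)"
    using X Y bicomodule_homs by auto
  with tensor_coactions_compatible[OF \<open>tensor_compatible\<close> _ _ _ _ kx ky]
  show ?thesis using F.comodule_tensor[OF cX(1) cY(1)] G.comodule_tensor[OF cX(2) cY(2)]
    by (simp add: is_bicomodule_def btens_def)
qed

lemma bicomodule_unit_iff: "bicomodule (bunit C F0 G0) \<longleftrightarrow> unit_compatible"
  using F.comodule_unit G.comodule_unit by (simp add: is_bicomodule_def bunit_def unit_compatible_def)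

lemma tmor_bicomodule_map:
  assumes "bicomodule (X, \<theta>X, \<rho>X)" "bicomodule (X', \<theta>X', \<rho>X')"
    and "bicomodule (Y, \<theta>Y, \<rho>Y)" "bicomodule (Y', \<theta>Y', \<rho>Y')"
    and f: "is_bicomodule_map C F G (X, \<theta>X, \<rho>X) (X', \<theta>X', \<rho>X') f"
    and g: "is_bicomodule_map C F G (Y, \<theta>Y, \<rho>Y) (Y', \<theta>Y', \<rho>Y') g"
  shows "is_bicomodule_map C F G (btens C F2 G2 (X, \<theta>X, \<rho>X) (Y, \<theta>Y, \<rho>Y))
          (btens C F2 G2 (X', \<theta>X', \<rho>X') (Y', \<theta>Y', \<rho>Y')) (tmor C f g)"
proof -
  have h: "hom C \<theta>X X (fo F X)" "hom C \<theta>X' X' (fo F X')" "hom C \<theta>Y Y (fo F Y)" "hom C \<theta>Y' Y' (fo F Y')"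
     "hom C \<rho>X X (fo G X)" "hom C \<rho>X' X' (fo G X')" "hom C \<rho>Y Y (fo G Y)" "hom C \<rho>Y' Y' (fo G Y')"
    using assms(1-4) bicomodule_homs by auto
  show ?thesis using f g F.tmor_comodule_map[OF _ _ h(1-4)] G.tmor_comodule_map[OF _ _ h(5-8)]
    by (simp add: is_bicomodule_map_def btens_def)
qed

lemma bicomodule_iso_if_iso:
  assumes f: "is_bicomodule_map C F G (X, \<theta>X, \<rho>X) (Y, \<theta>Y, \<rho>Y) f" and "iso C f"
    and h: "hom C \<theta>X X (fo F X)" "hom C \<theta>Y Y (fo F Y)" "hom C \<rho>X X (fo G X)" "hom C \<rho>Y Y (fo G Y)"
  shows "is_bicomodule_iso C F G (X, \<theta>X, \<rho>X) (Y, \<theta>Y, \<rho>Y) f"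
proof -
  have fF: "is_comodule_map C F X \<theta>X Y \<theta>Y f" and fG: "is_comodule_map C G X \<rho>X Y \<rho>Y f"
    using f by (auto simp: is_bicomodule_map_def)
  obtain g where g: "hom C g Y X" "ccomp C g f = cid C X" "ccomp C f g = cid C Y"
    using \<open>iso C f\<close> fF by (auto simp: iso_def is_comodule_map_def hom_def)
  show ?thesis using F.inverse_comodule_map[OF fF g h(1,2)] G.inverse_comodule_map[OF fG g h(3,4)] f g
    by (auto simp: is_bicomodule_iso_def is_bicomodule_map_def)
qed

lemma assoc_bicomodule_iso:
  assumes "bicomodule (X, \<theta>X, \<rho>X)" "bicomodule (Y, \<theta>Y, \<rho>Y)" "bicomodule (Z, \<theta>Z, \<rho>Z)"
  shows "is_bicomodule_iso C F G
      (btens C F2 G2 (btens C F2 G2 (X, \<theta>X, \<rho>X) (Y, \<theta>Y, \<rho>Y)) (Z, \<theta>Z, \<rho>Z))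
      (btens C F2 G2 (X, \<theta>X, \<rho>X) (btens C F2 G2 (Y, \<theta>Y, \<rho>Y) (Z, \<theta>Z, \<rho>Z))) (assoc C X Y Z)"
proof -
  have h: "hom C \<theta>X X (fo F X)" "hom C \<rho>X X (fo G X)" "hom C \<theta>Y Y (fo F Y)" "hom C \<rho>Y Y (fo G Y)"
     "hom C \<theta>Z Z (fo F Z)" "hom C \<rho>Z Z (fo G Z)"
    using bicomodule_homs assms by auto
  then have [simp]: "cdom C \<theta>X = X" "ccod C \<theta>X = fo F X" "cdom C \<rho>X = X" "ccod C \<rho>X = fo G X"
    "cdom C \<theta>Y = Y" "ccod C \<theta>Y = fo F Y" "cdom C \<rho>Y = Y" "ccod C \<rho>Y = fo G Y"
    "cdom C \<theta>Z = Z" "ccod C \<theta>Z = fo F Z" "cdom C \<rho>Z = Z" "ccod C \<rho>Z = fo G Z"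
    by (auto simp: hom_def)
  show ?thesis unfolding btens_def prod.case
    by (rule bicomodule_iso_if_iso)
      (use F.assoc_comodule_map[OF h(1,3,5)] G.assoc_comodule_map[OF h(2,4,6)] F.iso_assoc in
        \<open>auto simp: is_bicomodule_map_def hom_def\<close>)
qed

lemma lunit_bicomodule_iso:
  assumes "bicomodule (X, \<theta>X, \<rho>X)"
  shows "is_bicomodule_iso C F G (btens C F2 G2 (bunit C F0 G0) (X, \<theta>X, \<rho>X)) (X, \<theta>X, \<rho>X) (lunit C X)"
proof -
  have h: "hom C \<theta>X X (fo F X)" "hom C \<rho>X X (fo G X)"
    using bicomodule_homs assms by auto
  then have [simp]: "cdom C \<theta>X = X" "ccod C \<theta>X = fo F X" "cdom C \<rho>X = X" "ccod C \<rho>X = fo G X"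
    by (auto simp: hom_def)
  show ?thesis unfolding btens_def bunit_def prod.case
    by (rule bicomodule_iso_if_iso)
      (use F.lunit_comodule_map[OF h(1)] G.lunit_comodule_map[OF h(2)] F.iso_lunit in
        \<open>auto simp: is_bicomodule_map_def hom_def\<close>)
qed

lemma runit_bicomodule_iso:
  assumes "bicomodule (X, \<theta>X, \<rho>X)"
  shows "is_bicomodule_iso C F G (btens C F2 G2 (X, \<theta>X, \<rho>X) (bunit C F0 G0)) (X, \<theta>X, \<rho>X) (runit C X)"
proof -
  have h: "hom C \<theta>X X (fo F X)" "hom C \<rho>X X (fo G X)"
    using bicomodule_homs assms by auto
  then have [simp]: "cdom C \<theta>X = X" "ccod C \<theta>X = fo F X" "cdom C \<rho>X = X" "ccod C \<rho>X = fo G X"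
    by (auto simp: hom_def)
  show ?thesis unfolding btens_def bunit_def prod.case
    by (rule bicomodule_iso_if_iso)
      (use F.runit_comodule_map[OF h(1)] G.runit_comodule_map[OF h(2)] F.iso_runit in
        \<open>auto simp: is_bicomodule_map_def hom_def\<close>)
qed

lemma monoidal_if_compatible:
  assumes tensor_compatible and unit_compatible
  shows "bicomodules_monoidal C F \<Delta> \<epsilon> F2 F0 G \<delta> \<epsilon>' G2 G0 \<phi>"
  unfolding bicomodules_monoidal_def Let_def
proof (intro conjI allI impI)
  show "bicomodule (bunit C F0 G0)"
    using assms(2) bicomodule_unit_iff by simp
next
  fix X Y assume "bicomodule X \<and> bicomodule Y"
  then show "bicomodule (btens C F2 G2 X Y)"
    using assms(1) by (cases X rule: prod_cases3, cases Y rule: prod_cases3) (auto intro: bicomodule_tensor)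
next
  fix X X' Y Y' f g
  assume "bicomodule X \<and> bicomodule X' \<and> bicomodule Y \<and> bicomodule Y' \<and>
    is_bicomodule_map C F G X X' f \<and> is_bicomodule_map C F G Y Y' g"
  then show "is_bicomodule_map C F G (btens C F2 G2 X Y) (btens C F2 G2 X' Y') (tmor C f g)"
    by (cases X rule: prod_cases3, cases Y rule: prod_cases3, cases X' rule: prod_cases3,
        cases Y' rule: prod_cases3) (auto intro: tmor_bicomodule_map)
next
  fix X Y Z assume "bicomodule X \<and> bicomodule Y \<and> bicomodule Z"
  then show "is_bicomodule_iso C F G (btens C F2 G2 (btens C F2 G2 X Y) Z)
      (btens C F2 G2 X (btens C F2 G2 Y Z)) (assoc C (fst X) (fst Y) (fst Z))"
    by (cases X rule: prod_cases3, cases Y rule: prod_cases3, cases Z rule: prod_cases3)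
      (auto intro: assoc_bicomodule_iso)
next
  fix X assume "bicomodule X"
  then show "is_bicomodule_iso C F G (btens C F2 G2 (bunit C F0 G0) X) X (lunit C (fst X))"
    by (cases X rule: prod_cases3) (auto intro: lunit_bicomodule_iso)
next
  fix X assume "bicomodule X"
  then show "is_bicomodule_iso C F G (btens C F2 G2 X (bunit C F0 G0)) X (runit C (fst X))"
    by (cases X rule: prod_cases3) (auto intro: runit_bicomodule_iso)
qed

abbreviation cofree_coaction :: "'o \<Rightarrow> 'm" where
  "cofree_coaction M \<equiv> ccomp C (\<phi> (fo G M)) (fm F (\<delta> M))"

abbreviation cofree_bicomodule :: "'o \<Rightarrow> 'o \<times> 'm \<times> 'm" where
  "cofree_bicomodule M \<equiv> (fo F (fo G M), \<Delta> (fo G M), cofree_coaction M)"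

abbreviation cofree_counit :: "'o \<Rightarrow> 'm" where
  "cofree_counit M \<equiv> ccomp C (\<epsilon>' M) (\<epsilon> (fo G M))"

lemma bicomodule_cofree: "bicomodule (cofree_bicomodule M)"
proof -
  have pn: "ccomp C (fm G (fm F (\<delta> M))) (\<phi> (fo G M)) = ccomp C (\<phi> (fo G (fo G M))) (fm F (fm G (\<delta> M)))"
    using phi_naturality[of "\<delta> M"] by simp
  have "ccomp C (fm G (cofree_coaction M)) (cofree_coaction M)
      = ccomp C (fm G (\<phi> (fo G M))) (ccomp C (\<phi> (fo G (fo G M))) (ccomp C (fm F (fm G (\<delta> M))) (fm F (\<delta> M))))"
    using arg_cong[OF pn, of "\<lambda>s. ccomp C s (fm F (\<delta> M))"] by (simp add: G.fm_comp)
  also have "\<dots> = ccomp C (fm G (\<phi> (fo G M))) (ccomp C (\<phi> (fo G (fo G M))) (fm F (ccomp C (\<delta> (fo G M)) (\<delta> M))))"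
    by (simp add: F.fm_comp[symmetric] G.coassoc)
  also have "\<dots> = ccomp C (\<delta> (fo F (fo G M))) (cofree_coaction M)"
    using arg_cong[OF phi_G_comult[of "fo G M"], of "\<lambda>s. ccomp C s (fm F (\<delta> M))"] by (simp add: F.fm_comp)
  finally have G_coassoc: "ccomp C (fm G (cofree_coaction M)) (cofree_coaction M)
     = ccomp C (\<delta> (fo F (fo G M))) (cofree_coaction M)" .
  have G_counit: "ccomp C (\<epsilon>' (fo F (fo G M))) (cofree_coaction M) = cid C (fo F (fo G M))"
    using arg_cong[OF phi_G_counit[of "fo G M"], of "\<lambda>s. ccomp C s (fm F (\<delta> M))"]
    by (simp add: F.fm_comp[symmetric] G.counit_comult)
  have dn: "ccomp C (fm F (fm F (\<delta> M))) (\<Delta> (fo G M)) = ccomp C (\<Delta> (fo G (fo G M))) (fm F (\<delta> M))"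
    using F.comult_naturality[of "\<delta> M"] by simp
  have "ccomp C (\<phi> (fo F (fo G M))) (ccomp C (fm F (cofree_coaction M)) (\<Delta> (fo G M)))
     = ccomp C (\<phi> (fo F (fo G M))) (ccomp C (fm F (\<phi> (fo G M))) (ccomp C (\<Delta> (fo G (fo G M))) (fm F (\<delta> M))))"
    by (simp add: F.fm_comp dn)
  also have "\<dots> = ccomp C (fm G (\<Delta> (fo G M))) (cofree_coaction M)"
    using arg_cong[OF phi_F_comult[of "fo G M"], of "\<lambda>s. ccomp C s (fm F (\<delta> M))"] by simp
  finally have compatible: "ccomp C (\<phi> (fo F (fo G M))) (ccomp C (fm F (cofree_coaction M)) (\<Delta> (fo G M)))
     = ccomp C (fm G (\<Delta> (fo G M))) (cofree_coaction M)" .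
  show ?thesis using G_coassoc G_counit compatible F.coassoc[of "fo G M"] F.counit_comult[of "fo G M"]
    by (simp add: is_bicomodule_def is_comodule_def hom_def)
qed

lemma G_cofree_counit_coaction: "ccomp C (fm G (cofree_counit M)) (cofree_coaction M) = \<epsilon> (fo G M)"
proof -
  have en: "ccomp C (\<delta> M) (\<epsilon> (fo G M)) = ccomp C (\<epsilon> (fo G (fo G M))) (fm F (\<delta> M))"
    using F.counit_naturality[of "\<delta> M"] by simp
  have "ccomp C (fm G (cofree_counit M)) (cofree_coaction M)
     = ccomp C (fm G (\<epsilon>' M)) (ccomp C (\<epsilon> (fo G (fo G M))) (fm F (\<delta> M)))"
    using arg_cong[OF phi_F_counit[of "fo G M"], of "\<lambda>s. ccomp C s (fm F (\<delta> M))"] by (simp add: G.fm_comp)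
  also have "\<dots> = \<epsilon> (fo G M)"
    using arg_cong[OF G.fm_counit_comult[of M], of "\<lambda>s. ccomp C s (\<epsilon> (fo G M))"] by (simp flip: en)
  finally show ?thesis .
qed

lemma F_cofree_counit_comult: "ccomp C (fm F (cofree_counit M)) (\<Delta> (fo G M)) = fm F (\<epsilon>' M)"
  by (simp add: F.fm_comp F.fm_counit_comult)

lemma GF_counit_cofree_coaction: "ccomp C (fm G (fm F (\<epsilon>' M))) (cofree_coaction M) = \<phi> M"
proof -
  have pn: "ccomp C (fm G (fm F (\<epsilon>' M))) (\<phi> (fo G M)) = ccomp C (\<phi> M) (fm F (fm G (\<epsilon>' M)))"
    using phi_naturality[of "\<epsilon>' M"] by simp
  show ?thesis using arg_cong[OF pn, of "\<lambda>s. ccomp C s (fm F (\<delta> M))"]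
    by (simp add: F.fm_comp[symmetric] G.fm_counit_comult)
qed

lemma cofree_tensor_compatibility_lhs:
  assumes "btens C F2 G2 (cofree_bicomodule M) (cofree_bicomodule N) = (X, \<theta>, \<rho>)"
  shows "ccomp C (fm G (fm F (tmor C (cofree_counit M) (cofree_counit N))))
           (ccomp C (\<phi> X) (ccomp C (fm F \<rho>) \<theta>))
         = ccomp C (\<phi> (tobj C M N)) (ccomp C (fm F (G2 M N)) (F2 (fo G M) (fo G N)))"
proof -
  let ?X = "fo F (fo G M)" and ?Y = "fo F (fo G N)"
  let ?h = "tmor C (cofree_counit M) (cofree_counit N)"
  let ?\<theta> = "ccomp C (F2 ?X ?Y) (tmor C (\<Delta> (fo G M)) (\<Delta> (fo G N)))"
  let ?\<rho> = "ccomp C (G2 ?X ?Y) (tmor C (cofree_coaction M) (cofree_coaction N))"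
  have tensor: "X = tobj C ?X ?Y" "\<theta> = ?\<theta>" "\<rho> = ?\<rho>"
    using assms by (auto simp: btens_def)
  have pn: "ccomp C (fm G (fm F ?h)) (\<phi> (tobj C ?X ?Y)) = ccomp C (\<phi> (tobj C M N)) (fm F (fm G ?h))"
    using phi_naturality[of ?h] by simp
  have G_h_coaction: "ccomp C (fm G ?h) ?\<rho> = ccomp C (G2 M N) (tmor C (\<epsilon> (fo G M)) (\<epsilon> (fo G N)))"
  proof -
    have n: "ccomp C (fm G ?h) (G2 ?X ?Y)
        = ccomp C (G2 M N) (tmor C (fm G (cofree_counit M)) (fm G (cofree_counit N)))"
      using G.F2_naturality[of "cofree_counit M" "cofree_counit N"] by simp
    show ?thesis
      using arg_cong[OF n, of "\<lambda>s. ccomp C s (tmor C (cofree_coaction M) (cofree_coaction N))"]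
        G_cofree_counit_coaction[of M] G_cofree_counit_coaction[of N]
      by (simp flip: F.interchange)
  qed
  have f2n: "ccomp C (fm F (tmor C (\<epsilon> (fo G M)) (\<epsilon> (fo G N)))) (F2 ?X ?Y)
     = ccomp C (F2 (fo G M) (fo G N)) (tmor C (fm F (\<epsilon> (fo G M))) (fm F (\<epsilon> (fo G N))))"
    using F.F2_naturality[of "\<epsilon> (fo G M)" "\<epsilon> (fo G N)"] by simp
  have "ccomp C (fm G (fm F ?h)) (ccomp C (\<phi> (tobj C ?X ?Y)) (ccomp C (fm F ?\<rho>) ?\<theta>))
     = ccomp C (\<phi> (tobj C M N)) (ccomp C (fm F (ccomp C (fm G ?h) ?\<rho>)) ?\<theta>)"
    using arg_cong[OF pn, of "\<lambda>s. ccomp C s (ccomp C (fm F ?\<rho>) ?\<theta>)"] by (simp add: F.fm_comp)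
  also have "\<dots> = ccomp C (\<phi> (tobj C M N))
      (ccomp C (fm F (ccomp C (G2 M N) (tmor C (\<epsilon> (fo G M)) (\<epsilon> (fo G N))))) ?\<theta>)"
    by (simp only: G_h_coaction)
  also have "\<dots> = ccomp C (\<phi> (tobj C M N)) (ccomp C (fm F (G2 M N)) (ccomp C (F2 (fo G M) (fo G N))
      (tmor C (ccomp C (fm F (\<epsilon> (fo G M))) (\<Delta> (fo G M))) (ccomp C (fm F (\<epsilon> (fo G N))) (\<Delta> (fo G N))))))"
    using arg_cong[OF f2n, of "\<lambda>s. ccomp C s (tmor C (\<Delta> (fo G M)) (\<Delta> (fo G N)))"]
    by (simp add: F.fm_comp F.interchange)
  also have "\<dots> = ccomp C (\<phi> (tobj C M N)) (ccomp C (fm F (G2 M N)) (F2 (fo G M) (fo G N)))"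
    by (simp add: F.fm_counit_comult)
  finally show ?thesis by (simp only: tensor)
qed

lemma cofree_tensor_compatibility_rhs:
  assumes "btens C F2 G2 (cofree_bicomodule M) (cofree_bicomodule N) = (X, \<theta>, \<rho>)"
  shows "ccomp C (fm G (fm F (tmor C (cofree_counit M) (cofree_counit N)))) (ccomp C (fm G \<theta>) \<rho>)
         = ccomp C (fm G (F2 M N)) (ccomp C (G2 (fo F M) (fo F N)) (tmor C (\<phi> M) (\<phi> N)))"
proof -
  let ?X = "fo F (fo G M)" and ?Y = "fo F (fo G N)"
  let ?h = "tmor C (cofree_counit M) (cofree_counit N)"
  let ?\<theta> = "ccomp C (F2 ?X ?Y) (tmor C (\<Delta> (fo G M)) (\<Delta> (fo G N)))"
  let ?\<rho> = "ccomp C (G2 ?X ?Y) (tmor C (cofree_coaction M) (cofree_coaction N))"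
  have tensor: "\<theta> = ?\<theta>" "\<rho> = ?\<rho>"
    using assms by (auto simp: btens_def)
  have F_h_comult: "ccomp C (fm F ?h) ?\<theta> = ccomp C (F2 M N) (tmor C (fm F (\<epsilon>' M)) (fm F (\<epsilon>' N)))"
  proof -
    have n: "ccomp C (fm F ?h) (F2 ?X ?Y)
        = ccomp C (F2 M N) (tmor C (fm F (cofree_counit M)) (fm F (cofree_counit N)))"
      using F.F2_naturality[of "cofree_counit M" "cofree_counit N"] by simp
    show ?thesis
      using arg_cong[OF n, of "\<lambda>s. ccomp C s (tmor C (\<Delta> (fo G M)) (\<Delta> (fo G N)))"]
        F_cofree_counit_comult[of M] F_cofree_counit_comult[of N]
      by (simp flip: F.interchange)
  qed
  have g2n: "ccomp C (fm G (tmor C (fm F (\<epsilon>' M)) (fm F (\<epsilon>' N)))) (G2 ?X ?Y)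
      = ccomp C (G2 (fo F M) (fo F N)) (tmor C (fm G (fm F (\<epsilon>' M))) (fm G (fm F (\<epsilon>' N))))"
    using G.F2_naturality[of "fm F (\<epsilon>' M)" "fm F (\<epsilon>' N)"] by simp
  have "ccomp C (fm G (fm F ?h)) (ccomp C (fm G ?\<theta>) ?\<rho>)
      = ccomp C (fm G (ccomp C (F2 M N) (tmor C (fm F (\<epsilon>' M)) (fm F (\<epsilon>' N))))) ?\<rho>"
    using arg_cong[OF arg_cong[OF F_h_comult, of "fm G"], of "\<lambda>s. ccomp C s ?\<rho>"]
    by (simp add: G.fm_comp)
  also have "\<dots> = ccomp C (fm G (F2 M N)) (ccomp C (G2 (fo F M) (fo F N)) (tmor C (\<phi> M) (\<phi> N)))"
    using arg_cong[OF g2n, of "\<lambda>s. ccomp C s (tmor C (cofree_coaction M) (cofree_coaction N))"]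
      GF_counit_cofree_coaction[of M] GF_counit_cofree_coaction[of N]
    by (simp add: G.fm_comp flip: F.interchange)
  finally show ?thesis by (simp only: tensor)
qed

lemma tensor_compatible_if_cofree_tensors:
  assumes "\<And>M N. bicomodule (btens C F2 G2 (cofree_bicomodule M) (cofree_bicomodule N))"
  shows tensor_compatible
  unfolding tensor_compatible_def
proof (intro allI)
  fix M N
  obtain X \<theta> \<rho> where T: "btens C F2 G2 (cofree_bicomodule M) (cofree_bicomodule N) = (X, \<theta>, \<rho>)"
    by (metis prod_cases3)
  then have "ccomp C (\<phi> X) (ccomp C (fm F \<rho>) \<theta>) = ccomp C (fm G \<theta>) \<rho>"
    using assms[of M N] by (simp add: is_bicomodule_def)
  then show "ccomp C (\<phi> (tobj C M N)) (ccomp C (fm F (G2 M N)) (F2 (fo G M) (fo G N)))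
      = ccomp C (fm G (F2 M N)) (ccomp C (G2 (fo F M) (fo F N)) (tmor C (\<phi> M) (\<phi> N)))"
    using cofree_tensor_compatibility_lhs[OF T] cofree_tensor_compatibility_rhs[OF T] by metis
qed

lemma compatible_if_monoidal:
  assumes "bicomodules_monoidal C F \<Delta> \<epsilon> F2 F0 G \<delta> \<epsilon>' G2 G0 \<phi>"
  shows "tensor_compatible \<and> unit_compatible"
proof
  have "\<And>X Y. bicomodule X \<Longrightarrow> bicomodule Y \<Longrightarrow> bicomodule (btens C F2 G2 X Y)"
    using assms unfolding bicomodules_monoidal_def Let_def by blast
  then show tensor_compatible
    by (simp add: tensor_compatible_if_cofree_tensors bicomodule_cofree)
  show unit_compatible
    using assms bicomodule_unit_iff unfolding bicomodules_monoidal_def Let_def by blast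
qed

end

theorem lemma3p1:
  fixes C :: "('o,'m) moncat"
    and F G :: "('o,'m) endofunctor"
    and \<Delta> \<epsilon> \<delta> \<epsilon>' \<phi> :: "'o \<Rightarrow> 'm"
    and F2 G2 :: "'o \<Rightarrow> 'o \<Rightarrow> 'm"
    and F0 G0 :: 'm
  assumes "is_monoidal C"
    and "is_bicomonad C F \<Delta> \<epsilon> F2 F0"
    and "is_bicomonad C G \<delta> \<epsilon>' G2 G0"
    and "is_distributive_law C F \<Delta> \<epsilon> G \<delta> \<epsilon>' \<phi>"
  shows "bicomodules_monoidal C F \<Delta> \<epsilon> F2 F0 G \<delta> \<epsilon>' G2 G0 \<phi> \<longleftrightarrow>
    ((\<forall>M N. ccomp C (\<phi> (tobj C M N)) (ccomp C (fm F (G2 M N)) (F2 (fo G M) (fo G N)))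
            = ccomp C (fm G (F2 M N)) (ccomp C (G2 (fo F M) (fo F N)) (tmor C (\<phi> M) (\<phi> N)))) \<and>
     ccomp C (\<phi> (unit C)) (ccomp C (fm F G0) F0) = ccomp C (fm G F0) G0)"
proof -
  interpret distributive_bicomonads C F \<Delta> \<epsilon> F2 F0 G \<delta> \<epsilon>' G2 G0 \<phi>
    using assms by (simp add: distributive_bicomonads_def distributive_bicomonads_axioms_def
        bicomonad_def bicomonad_axioms_def monoidal_category_def)
  show ?thesis
    using compatible_if_monoidal monoidal_if_compatible
    unfolding tensor_compatible_def unit_compatible_def by blast
qed

end
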